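(* Let $(M,ds^2)$ be an $n$-dimensional Riemannian manifold, $1\le p\le n$. For every $x\in M$ and every $p$-form $g$ at $x$, $$p(n-p)\lambda_{\mathfrak R}(x)|g|^2\le\sum_{i_1<\cdots<i_p}\langle\mathfrak R\xi^g_{i_1\cdots i_p},\xi^g_{i_1\cdots i_p}\rangle\le p(n-p)\Lambda_{\mathfrak R}(x)|g|^2.$$
   Context: Local orthonormal frame $e_i$ with dual coframe $\omega^i$, summation convention; $g=\sum_{i_1<\dots<i_p}g_{i_1\cdots i_p}\omega^{i_1}\wedge\dots\wedge\omega^{i_p}$ with antisymmetrically extended coefficients. Curvature: $R_{XY}=D_XD_Y-D_YD_X-D_{[X,Y]}$ for the Levi-Civita connection $D$, $R_{ijk\ell}=\langle R_{e_ie_j}e_k,e_\ell\rangle$, and the curvature operator $\mathfrak R$ on $2$-forms is the self-adjoint map $\mathfrak R(\omega^i\wedge\omega^j)=R_{ij\ell k}\,\omega^k\wedge\omega^\ell$; $\lambda_{\mathfrak R}(x)$ and $\Lambda_{\mathfrak R}(x)$ are its smallest and largest eigenvalues at $x$. For $i_1<\dots<i_p$, $\xi^g_{i_1\cdots i_p}:=\sum_{a=1}^p\sum_{i=1}^n g_{i_1\cdots(i)_a\cdots i_p}\,\omega^i\wedge\omega^{i_a}$, where $(i)_a$ means the index in the $a$-th slot is replaced by $i$. *)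

theory Defs
  imports Complex_Main
begin

(* Pointwise data at x in an n-dimensional Riemannian manifold, w.r.t. an orthonormal
   frame e_0..e_{n-1}.  Indices are 0..n-1.  R i j k l = R_{ijkl} = <R_{e_i e_j} e_k, e_l>. *)

definition curvature_tensor :: "nat \<Rightarrow> (nat \<Rightarrow> nat \<Rightarrow> nat \<Rightarrow> nat \<Rightarrow> real) \<Rightarrow> bool" where
  "curvature_tensor n R \<longleftrightarrow>
     (\<forall>i<n. \<forall>j<n. \<forall>k<n. \<forall>l<n.
        R i j k l = - R j i k l \<and> R i j k l = - R i j l k \<and> R i j k l = R k l i j \<and>
        R i j k l + R j k i l + R k i j l = 0)"

(* A 2-form is represented by its antisymmetrically extended coefficient function a,
   i.e. sum_{k<l} a k l w^k /\ w^l. *)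
definition two_form :: "nat \<Rightarrow> (nat \<Rightarrow> nat \<Rightarrow> real) \<Rightarrow> bool" where
  "two_form n a \<longleftrightarrow> (\<forall>k<n. \<forall>l<n. a k l = - a l k)"

(* Coefficients (antisymmetrically extended) of  sum_{k,l} c k l  w^k /\ w^l. *)
definition wedge_coeffs :: "(nat \<Rightarrow> nat \<Rightarrow> real) \<Rightarrow> nat \<Rightarrow> nat \<Rightarrow> real" where
  "wedge_coeffs c k l = c k l - c l k"

(* Curvature operator: R(w^i /\ w^j) = R_{ijlk} w^k /\ w^l, extended linearly. *)
definition curv_op :: "nat \<Rightarrow> (nat \<Rightarrow> nat \<Rightarrow> nat \<Rightarrow> nat \<Rightarrow> real) \<Rightarrow>
    (nat \<Rightarrow> nat \<Rightarrow> real) \<Rightarrow> nat \<Rightarrow> nat \<Rightarrow> real" where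
  "curv_op n R a = wedge_coeffs (\<lambda>k l. \<Sum>i<n. \<Sum>j<n. (if i < j then a i j * R i j l k else 0))"

definition inner2 :: "nat \<Rightarrow> (nat \<Rightarrow> nat \<Rightarrow> real) \<Rightarrow> (nat \<Rightarrow> nat \<Rightarrow> real) \<Rightarrow> real" where
  "inner2 n a b = (\<Sum>k<n. \<Sum>l<n. (if k < l then a k l * b k l else 0))"

definition curv_eigenvalues :: "nat \<Rightarrow> (nat \<Rightarrow> nat \<Rightarrow> nat \<Rightarrow> nat \<Rightarrow> real) \<Rightarrow> real set" where
  "curv_eigenvalues n R = {\<mu>. \<exists>a. two_form n a \<and> (\<exists>k<n. \<exists>l<n. k < l \<and> a k l \<noteq> 0) \<and>
       (\<forall>k<n. \<forall>l<n. curv_op n R a k l = \<mu> * a k l)}"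

definition lambda_R :: "nat \<Rightarrow> (nat \<Rightarrow> nat \<Rightarrow> nat \<Rightarrow> nat \<Rightarrow> real) \<Rightarrow> real" where
  "lambda_R n R = Min (curv_eigenvalues n R)"

definition Lambda_R :: "nat \<Rightarrow> (nat \<Rightarrow> nat \<Rightarrow> nat \<Rightarrow> nat \<Rightarrow> real) \<Rightarrow> real" where
  "Lambda_R n R = Max (curv_eigenvalues n R)"

(* A p-form at the point: coefficient function on index lists of length p with entries < n,
   antisymmetrically extended (g = sum over increasing I of g I w^{i_1}/\.../\w^{i_p}). *)
definition p_form :: "nat \<Rightarrow> nat \<Rightarrow> (nat list \<Rightarrow> real) \<Rightarrow> bool" where
  "p_form n p g \<longleftrightarrow> (\<forall>xs. length xs = p \<longrightarrow> set xs \<subseteq> {..<n} \<longrightarrow>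
      (\<forall>a b. a < b \<and> b < p \<longrightarrow> g (xs[a := xs ! b, b := xs ! a]) = - g xs))"

definition incr_indices :: "nat \<Rightarrow> nat \<Rightarrow> nat list set" where
  "incr_indices n p = {xs. length xs = p \<and> sorted_wrt (<) xs \<and> set xs \<subseteq> {..<n}}"

definition form_norm_sq :: "nat \<Rightarrow> nat \<Rightarrow> (nat list \<Rightarrow> real) \<Rightarrow> real" where
  "form_norm_sq n p g = (\<Sum>I\<in>incr_indices n p. (g I)\<^sup>2)"

(* xi^g_I = sum_{a=1}^p sum_{i} g_{i_1..(i)_a..i_p} w^i /\ w^{i_a}  (coefficients) *)
definition xi :: "nat \<Rightarrow> nat \<Rightarrow> (nat list \<Rightarrow> real) \<Rightarrow> nat list \<Rightarrow> nat \<Rightarrow> nat \<Rightarrow> real" where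
  "xi n p g I = wedge_coeffs (\<lambda>k l. \<Sum>a<p. (if I ! a = l then g (I[a := k]) else 0))"

end

(*
  For an increasing multi-index I, the 2-form \<xi>\<^sup>g\<^sub>I has exactly the coefficients
  \<plusminus>g(I - {l} \<union> {k}) with l \<in> I and k \<notin> I, so |\<xi>\<^sup>g\<^sub>I|\<^sup>2 is the sum of their squares.
  Summing over I, every coefficient of g is reached from p(n - p) exchanges, hence
  \<Sum>\<^sub>I |\<xi>\<^sup>g\<^sub>I|\<^sup>2 = p(n - p) |g|\<^sup>2. The inequalities then hold termwise: the curvature operator is
  symmetric, and minimising (maximising) its quadratic form on the compact unit sphere gives an
  eigenvalue \<mu> with \<mu> |a|\<^sup>2 \<le> \<langle>\<R>a, a\<rangle> (resp. \<ge>), which lies between \<lambda>\<^sub>\<R> and \<Lambda>\<^sub>\<R>.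
*)

theory Submission
  imports Defs "HOL-Combinatorics.Permutations" "HOL-Analysis.Function_Topology"
    "Jordan_Normal_Form.Char_Poly"
begin

lemma p_form_swap_sq:
  assumes "p_form n p g" "length xs = p" "set xs \<subseteq> {..<n}" "a < p" "b < p"
  shows "(g (xs[a := xs ! b, b := xs ! a]))\<^sup>2 = (g xs)\<^sup>2"
proof (cases a b rule: linorder_cases)
  case less
  then show ?thesis using assms unfolding p_form_def by (metis power2_minus)
next
  case greater
  then have "xs[a := xs ! b, b := xs ! a] = xs[b := xs ! a, a := xs ! b]"
    by (simp add: list_update_swap)
  then show ?thesis using greater assms unfolding p_form_def by (metis power2_minus)
qed simp

lemma permute_list_transpose:
  assumes "a < length xs" "b < length xs"
  shows "permute_list (Transposition.transpose a b) xs = xs[a := xs ! b, b := xs ! a]"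
proof (rule nth_equalityI)
  fix i assume "i < length (permute_list (Transposition.transpose a b) xs)"
  moreover have "Transposition.transpose a b permutes {..<length xs}"
    using assms by (simp add: permutes_swap_id)
  ultimately show "permute_list (Transposition.transpose a b) xs ! i = xs[a := xs ! b, b := xs ! a] ! i"
    using assms by (auto simp: permute_list_nth nth_list_update transpose_def)
qed simp

lemma p_form_permute_sq:
  assumes "p_form n p g" "q permutes {..<p}" "length xs = p" "set xs \<subseteq> {..<n}"
  shows "(g (permute_list q xs))\<^sup>2 = (g xs)\<^sup>2"
proof -
  have "\<forall>xs. length xs = p \<longrightarrow> set xs \<subseteq> {..<n} \<longrightarrow> (g (permute_list q xs))\<^sup>2 = (g xs)\<^sup>2"
    using assms(2) finite_lessThan
  proof (induction q rule: permutes_induct)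
    case (swap a b q)
    show ?case
    proof (intro allI impI)
      fix xs :: "nat list" assume xs: "length xs = p" "set xs \<subseteq> {..<n}"
      let ?ys = "xs[a := xs ! b, b := xs ! a]"
      have "permute_list (Transposition.transpose a b \<circ> q) xs = permute_list q ?ys"
        using swap xs by (simp add: permute_list_compose permute_list_transpose)
      moreover have "set ?ys \<subseteq> {..<n}"
        using swap xs by (metis lessThan_iff set_swap)
      ultimately show "(g (permute_list (Transposition.transpose a b \<circ> q) xs))\<^sup>2 = (g xs)\<^sup>2"
        using swap xs p_form_swap_sq[OF assms(1)] by simp
    qed
  qed simp
  then show ?thesis using assms(3,4) by blast
qed

lemma p_form_sort_sq:
  assumes "p_form n p g" "length xs = p" "set xs \<subseteq> {..<n}" "distinct xs"
  shows "(g (sorted_list_of_set (set xs)))\<^sup>2 = (g xs)\<^sup>2"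
proof -
  obtain q where "q permutes {..<length xs}" "permute_list q xs = sort xs"
    using mset_eq_permutation[of "sort xs" xs] by auto
  moreover have "sorted_list_of_set (set xs) = sort xs"
    using assms(4) by (simp add: sorted_list_of_set_sort_remdups distinct_remdups_id)
  ultimately show ?thesis using p_form_permute_sq[OF assms(1)] assms(2,3) by metis
qed

lemma p_form_not_distinct:
  assumes "p_form n p g" "length xs = p" "set xs \<subseteq> {..<n}" "\<not> distinct xs"
  shows "g xs = 0"
proof -
  obtain a b where ab: "a < b" "b < length xs" "xs ! a = xs ! b"
    using assms(4) by (metis distinct_conv_nth linorder_neqE_nat)
  then have "g (xs[a := xs ! b, b := xs ! a]) = - g xs"
    using assms unfolding p_form_def by blast
  moreover have "xs[a := xs ! b, b := xs ! a] = xs"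
    using ab by (metis list_update_id)
  ultimately show ?thesis by simp
qed

lemma p_form_exchange_sq:
  assumes "p_form n p g" "length I = p" "set I \<subseteq> {..<n}" "distinct I"
    and "a < p" "k < n" "k \<notin> set I"
  shows "(g (I[a := k]))\<^sup>2 = (g (sorted_list_of_set (insert k (set I - {I ! a}))))\<^sup>2"
proof -
  have "set (I[a := k]) = insert k (set I - {I ! a})"
    using assms by (simp add: set_update_distinct)
  moreover have "set (I[a := k]) \<subseteq> {..<n}"
    using assms by (metis insert_subset lessThan_iff order_trans set_update_subset_insert)
  ultimately show ?thesis
    using assms p_form_sort_sq[OF assms(1), of "I[a := k]"] by (simp add: distinct_list_update)
qed

lemma sum_positions_sq:
  fixes f :: "nat \<Rightarrow> real"
  assumes "distinct I"
  shows "(\<Sum>a<length I. if I ! a = l then f a else 0)\<^sup>2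
       = (\<Sum>a<length I. if I ! a = l then (f a)\<^sup>2 else 0)"
proof (cases "l \<in> set I")
  case True
  then obtain a0 where a0: "a0 < length I" "I ! a0 = l" by (auto simp: in_set_conv_nth)
  then have "I ! a = l \<longleftrightarrow> a = a0" if "a < length I" for a
    using assms that nth_eq_iff_index_eq by metis
  then have "(\<Sum>a<length I. if I ! a = l then F a else 0) = (\<Sum>a<length I. if a = a0 then F a else 0)"
    for F :: "nat \<Rightarrow> real"
    by (intro sum.cong) auto
  then show ?thesis using a0 by simp
next
  case False
  then have "I ! a \<noteq> l" if "a < length I" for a
    using that by auto
  then show ?thesis by simp
qed

text \<open>The coefficient of \<open>\<omega>\<^sup>k \<and> \<omega>\<^sup>l\<close> in \<open>\<xi>\<^sup>g\<^sub>I\<close> contributed by replacing the entry \<open>l\<close> of \<open>I\<close>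
  by a new index \<open>k\<close>; replacements by an index already in \<open>I\<close> vanish by antisymmetry.\<close>

definition exchange_coeff :: "(nat list \<Rightarrow> real) \<Rightarrow> nat list \<Rightarrow> nat \<Rightarrow> nat \<Rightarrow> real" where
  "exchange_coeff g I k l =
     (if k \<in> set I then 0 else \<Sum>a<length I. if I ! a = l then g (I[a := k]) else 0)"

lemma exchange_coeff_disjoint: "exchange_coeff g I k l * exchange_coeff g I l k = 0"
proof (cases "l \<in> set I")
  case False
  then have "exchange_coeff g I k l = 0"
    unfolding exchange_coeff_def by (auto intro!: sum.neutral)
  then show ?thesis by simp
qed (simp add: exchange_coeff_def)

lemma xi_eq_wedge_exchange_coeff:
  assumes "p_form n p g" "length I = p" "set I \<subseteq> {..<n}" "distinct I" "k < n" "l < n"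
  shows "xi n p g I k l = wedge_coeffs (exchange_coeff g I) k l"
proof -
  have exchange: "(\<Sum>a<p. if I ! a = l then g (I[a := k]) else 0) = exchange_coeff g I k l"
    if "k \<noteq> l" "k < n" for k l
  proof (cases "k \<in> set I")
    case True
    then obtain b where b: "b < p" "I ! b = k" using assms(2) by (auto simp: in_set_conv_nth)
    have "g (I[a := k]) = 0" if "a < p" "I ! a = l" for a
    proof (rule p_form_not_distinct[OF assms(1)])
      have "a \<noteq> b" using b that \<open>k \<noteq> l\<close> by auto
      then show "\<not> distinct (I[a := k])"
        using that b assms(2) by (metis length_list_update nth_eq_iff_index_eq nth_list_update_eq nth_list_update_neq)
      show "set (I[a := k]) \<subseteq> {..<n}"
        using assms(3) \<open>k < n\<close> by (metis insert_subset lessThan_iff order_trans set_update_subset_insert)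
    qed (use assms(2) in simp)
    then show ?thesis using True by (auto simp: exchange_coeff_def intro!: sum.neutral)
  qed (simp add: exchange_coeff_def assms(2))
  show ?thesis
    using exchange[of k l] exchange[of l k] assms(5,6)
    by (cases "k = l") (simp_all add: xi_def wedge_coeffs_def)
qed

lemma sum_less_pairs_swap:
  fixes h :: "nat \<Rightarrow> nat \<Rightarrow> real"
  shows "(\<Sum>k<n. \<Sum>l<n. if k < l then h k l + h l k else 0) = (\<Sum>k<n. \<Sum>l<n. if k \<noteq> l then h k l else 0)"
proof -
  have "(\<Sum>k<n. \<Sum>l<n. if k < l then h k l + h l k else 0)
      = (\<Sum>k<n. \<Sum>l<n. if k < l then h k l else 0) + (\<Sum>k<n. \<Sum>l<n. if k < l then h l k else 0)"
    by (simp add: sum.distrib[symmetric] if_distrib cong: if_cong)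
  also have "(\<Sum>k<n. \<Sum>l<n. if k < l then h l k else 0) = (\<Sum>k<n. \<Sum>l<n. if l < k then h k l else 0)"
    by (rule sum.swap)
  also have "(\<Sum>k<n. \<Sum>l<n. if k < l then h k l else 0) + \<dots> = (\<Sum>k<n. \<Sum>l<n. if k \<noteq> l then h k l else 0)"
    by (simp add: sum.distrib[symmetric]) (intro sum.cong; auto)
  finally show ?thesis .
qed

lemma inner2_wedge_coeffs_self:
  assumes "\<And>k l. h k l * h l k = 0"
  shows "inner2 n (wedge_coeffs h) (wedge_coeffs h) = (\<Sum>k<n. \<Sum>l<n. (h k l)\<^sup>2)"
proof -
  have "inner2 n (wedge_coeffs h) (wedge_coeffs h)
      = (\<Sum>k<n. \<Sum>l<n. if k < l then (h k l)\<^sup>2 + (h l k)\<^sup>2 else 0)"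
    unfolding inner2_def wedge_coeffs_def
    by (intro sum.cong refl) (simp add: assms power2_eq_square algebra_simps)
  also have "\<dots> = (\<Sum>k<n. \<Sum>l<n. if k \<noteq> l then (h k l)\<^sup>2 else 0)"
    by (rule sum_less_pairs_swap)
  also have "\<dots> = (\<Sum>k<n. \<Sum>l<n. (h k l)\<^sup>2)"
    using assms[of k k for k] by (intro sum.cong refl) (auto simp: power2_eq_square)
  finally show ?thesis .
qed

lemma xi_norm_sq:
  assumes pf: "p_form n p g" and I: "length I = p" "set I \<subseteq> {..<n}" "distinct I"
  shows "inner2 n (xi n p g I) (xi n p g I)
       = (\<Sum>l\<in>set I. \<Sum>k\<in>{..<n} - set I. (g (sorted_list_of_set (insert k (set I - {l}))))\<^sup>2)"
proof -
  have "inner2 n (xi n p g I) (xi n p g I)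
      = inner2 n (wedge_coeffs (exchange_coeff g I)) (wedge_coeffs (exchange_coeff g I))"
    unfolding inner2_def using xi_eq_wedge_exchange_coeff[OF pf I] by (intro sum.cong refl) auto
  also have "\<dots> = (\<Sum>k<n. \<Sum>l<n. (exchange_coeff g I k l)\<^sup>2)"
    by (rule inner2_wedge_coeffs_self[OF exchange_coeff_disjoint])
  also have "\<dots> = (\<Sum>k\<in>{..<n} - set I. \<Sum>a<p. (g (I[a := k]))\<^sup>2)"
  proof -
    have "(\<Sum>l<n. (exchange_coeff g I k l)\<^sup>2)
        = (if k \<in> set I then 0 else \<Sum>a<p. (g (I[a := k]))\<^sup>2)" for k
    proof -
      have "(\<Sum>l<n. \<Sum>a<p. if I ! a = l then (g (I[a := k]))\<^sup>2 else 0) = (\<Sum>a<p. (g (I[a := k]))\<^sup>2)"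
        using I nth_mem by (subst sum.swap) (fastforce intro!: sum.cong)
      then show ?thesis
        unfolding exchange_coeff_def using sum_positions_sq[OF I(3)] I(1) by simp
    qed
    then show ?thesis by (simp add: sum.If_cases Diff_eq)
  qed
  also have "\<dots> = (\<Sum>a<p. \<Sum>k\<in>{..<n} - set I. (g (sorted_list_of_set (insert k (set I - {I ! a}))))\<^sup>2)"
    using p_form_exchange_sq[OF pf I(1-3)] by (subst sum.swap) (intro sum.cong refl; auto)
  also have "\<dots> = (\<Sum>l\<in>set I. \<Sum>k\<in>{..<n} - set I. (g (sorted_list_of_set (insert k (set I - {l}))))\<^sup>2)"
    using I by (simp add: sum_list_distinct_conv_sum_set[symmetric] sum.list_conv_set_nth atLeast0LessThan)
  finally show ?thesis .
qed

lemma bij_betw_sorted_list_of_set_incr_indices: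
  "bij_betw sorted_list_of_set {S. S \<subseteq> {..<n} \<and> card S = p} (incr_indices n p)"
proof (rule bij_betw_byWitness[where f' = set])
  show "\<forall>S\<in>{S. S \<subseteq> {..<n} \<and> card S = p}. set (sorted_list_of_set S) = S"
    by (auto dest: finite_subset)
  show "\<forall>I\<in>incr_indices n p. sorted_list_of_set (set I) = I"
    unfolding incr_indices_def by (auto simp: sorted_list_of_set.idem_if_sorted_distinct strict_sorted_iff)
  show "sorted_list_of_set ` {S. S \<subseteq> {..<n} \<and> card S = p} \<subseteq> incr_indices n p"
    unfolding incr_indices_def using finite_subset by fastforce
  show "set ` incr_indices n p \<subseteq> {S. S \<subseteq> {..<n} \<and> card S = p}"
    unfolding incr_indices_def by (auto simp: strict_sorted_iff distinct_card)
qed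

lemma sum_incr_indices:
  "(\<Sum>I\<in>incr_indices n p. f I) = (\<Sum>S | S \<subseteq> {..<n} \<and> card S = p. f (sorted_list_of_set S))"
  using sum.reindex_bij_betw[OF bij_betw_sorted_list_of_set_incr_indices] by metis

text \<open>Double counting: \<open>(S, l, k) \<mapsto> (insert k (S - {l}), k, l)\<close> is an involution on the
  triples with \<open>l \<in> S\<close> and \<open>k \<notin> S\<close>.\<close>

lemma sum_exchanges_double_count:
  fixes G :: "nat set \<Rightarrow> real"
  assumes "p \<le> n"
  shows "(\<Sum>S | S \<subseteq> {..<n} \<and> card S = p. \<Sum>l\<in>S. \<Sum>k\<in>{..<n} - S. G (insert k (S - {l})))
       = real (p * (n - p)) * (\<Sum>S | S \<subseteq> {..<n} \<and> card S = p. G S)"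
proof -
  define Sets where "Sets = {S. S \<subseteq> {..<n} \<and> card S = p}"
  define X where "X = Sigma Sets (\<lambda>S. S \<times> ({..<n} - S))"
  define swap where "swap = (\<lambda>(S::nat set, (l::nat, k::nat)). (insert k (S - {l}), (k, l)))"
  have finite_Sets: "finite Sets" and finite_member: "S \<in> Sets \<Longrightarrow> finite S" for S
    unfolding Sets_def by (auto intro: finite_subset[of _ "Pow {..<n}"] finite_subset)
  have sum_X: "(\<Sum>S\<in>Sets. \<Sum>l\<in>S. \<Sum>k\<in>{..<n} - S. F S l k) = (\<Sum>(S, l, k)\<in>X. F S l k)"
    for F :: "nat set \<Rightarrow> nat \<Rightarrow> nat \<Rightarrow> real"
  proof -
    have "(\<Sum>S\<in>Sets. \<Sum>l\<in>S. \<Sum>k\<in>{..<n} - S. F S l k) = (\<Sum>S\<in>Sets. \<Sum>(l, k)\<in>S \<times> ({..<n} - S). F S l k)"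
      using finite_member by (simp add: sum.cartesian_product)
    also have "\<dots> = (\<Sum>(S, l, k)\<in>X. F S l k)"
      unfolding X_def using finite_Sets finite_member by (subst sum.Sigma) (auto simp: split_def)
    finally show ?thesis .
  qed
  have swap_X: "swap x \<in> X" and swap_swap: "swap (swap x) = x" if x_X: "x \<in> X" for x
  proof -
    obtain S l k where x: "x = (S, l, k)" and S: "S \<subseteq> {..<n}" "card S = p" "l \<in> S" "k < n" "k \<notin> S"
      using x_X unfolding X_def Sets_def by (cases x) auto
    have "finite S" using finite_subset[OF S(1)] by simp
    then have "p > 0"
      using S card_gt_0_iff by blast
    with S \<open>finite S\<close> have "card (insert k (S - {l})) = p"
      by (simp add: card_Diff_singleton)
    then show "swap x \<in> X" unfolding x swap_def X_def Sets_def using S by auto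
    show "swap (swap x) = x" unfolding x swap_def using S by auto
  qed
  have "(\<Sum>S\<in>Sets. \<Sum>l\<in>S. \<Sum>k\<in>{..<n} - S. G (insert k (S - {l}))) = (\<Sum>x\<in>X. G (fst (swap x)))"
    unfolding sum_X by (intro sum.cong) (auto simp: swap_def)
  also have "\<dots> = (\<Sum>x\<in>X. G (fst x))"
    by (rule sum.reindex_bij_witness[where i = swap and j = swap]) (auto simp: swap_X swap_swap)
  also have "\<dots> = (\<Sum>S\<in>Sets. \<Sum>l\<in>S. \<Sum>k\<in>{..<n} - S. G S)"
    unfolding sum_X by (intro sum.cong) auto
  also have "\<dots> = (\<Sum>S\<in>Sets. real (p * (n - p)) * G S)"
  proof (intro sum.cong refl)
    fix S assume "S \<in> Sets"
    then have "card S = p" "card ({..<n} - S) = n - p"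
      unfolding Sets_def by (auto simp: card_Diff_subset finite_subset)
    then show "(\<Sum>l\<in>S. \<Sum>k\<in>{..<n} - S. G S) = real (p * (n - p)) * G S" by simp
  qed
  finally show ?thesis unfolding Sets_def by (simp add: sum_distrib_left)
qed

lemma sum_xi_norm_sq:
  assumes "p_form n p g" "p \<le> n"
  shows "(\<Sum>I\<in>incr_indices n p. inner2 n (xi n p g I) (xi n p g I)) = real (p * (n - p)) * form_norm_sq n p g"
proof -
  have "inner2 n (xi n p g (sorted_list_of_set S)) (xi n p g (sorted_list_of_set S))
      = (\<Sum>l\<in>S. \<Sum>k\<in>{..<n} - S. (g (sorted_list_of_set (insert k (S - {l}))))\<^sup>2)"
    if "S \<subseteq> {..<n}" "card S = p" for S
    using xi_norm_sq[OF assms(1), of "sorted_list_of_set S"] that finite_subset[OF that(1)] by simp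
  then show ?thesis
    unfolding form_norm_sq_def sum_incr_indices sum_exchanges_double_count[OF assms(2), symmetric]
    by (intro sum.cong) auto
qed

definition quad_form :: "'a set \<Rightarrow> ('a \<Rightarrow> 'a \<Rightarrow> real) \<Rightarrow> ('a \<Rightarrow> real) \<Rightarrow> real" where
  "quad_form J A w = (\<Sum>p\<in>J. (\<Sum>q\<in>J. A p q * w q) * w p)"

definition sq_norm_on :: "'a set \<Rightarrow> ('a \<Rightarrow> real) \<Rightarrow> real" where
  "sq_norm_on J w = (\<Sum>p\<in>J. (w p)\<^sup>2)"

lemma sq_norm_on_nonneg: "0 \<le> sq_norm_on J w"
  unfolding sq_norm_on_def by (simp add: sum_nonneg)

lemma sq_norm_on_eq_0_iff:
  assumes "finite J"
  shows "sq_norm_on J w = 0 \<longleftrightarrow> (\<forall>p\<in>J. w p = 0)"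
  unfolding sq_norm_on_def using assms by (simp add: sum_nonneg_eq_0_iff)

lemma quad_form_scale: "quad_form J A (\<lambda>i. c * w i) = c\<^sup>2 * quad_form J A w"
  unfolding quad_form_def by (simp add: sum_distrib_left power2_eq_square algebra_simps)

lemma sq_norm_on_scale: "sq_norm_on J (\<lambda>i. c * w i) = c\<^sup>2 * sq_norm_on J w"
  unfolding sq_norm_on_def by (simp add: sum_distrib_left power2_eq_square algebra_simps)

lemma quad_form_add_scaled:
  assumes sym: "\<And>p q. p \<in> J \<Longrightarrow> q \<in> J \<Longrightarrow> A p q = A q p"
  shows "quad_form J A (\<lambda>i. v i + t * u i)
       = quad_form J A v + 2 * t * (\<Sum>p\<in>J. (\<Sum>q\<in>J. A p q * v q) * u p) + t\<^sup>2 * quad_form J A u"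
proof -
  define Av Au where "Av p = (\<Sum>q\<in>J. A p q * v q)" and "Au p = (\<Sum>q\<in>J. A p q * u q)" for p
  have cross: "(\<Sum>p\<in>J. Au p * v p) = (\<Sum>p\<in>J. Av p * u p)"
  proof -
    have "(\<Sum>p\<in>J. Au p * v p) = (\<Sum>p\<in>J. \<Sum>q\<in>J. A p q * u q * v p)"
      by (simp add: Au_def sum_distrib_right)
    also have "\<dots> = (\<Sum>q\<in>J. \<Sum>p\<in>J. A p q * u q * v p)"
      by (rule sum.swap)
    also have "\<dots> = (\<Sum>q\<in>J. \<Sum>p\<in>J. A q p * v p * u q)"
      by (intro sum.cong refl) (simp add: sym)
    finally show ?thesis by (simp add: Av_def sum_distrib_right)
  qed
  have linear: "(\<Sum>q\<in>J. A p q * (v q + t * u q)) = Av p + t * Au p" for p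
    by (simp add: Av_def Au_def distrib_left sum.distrib sum_distrib_left mult.left_commute)
  have "quad_form J A (\<lambda>i. v i + t * u i) = (\<Sum>p\<in>J. (Av p + t * Au p) * (v p + t * u p))"
    unfolding quad_form_def linear ..
  also have "\<dots> = (\<Sum>p\<in>J. Av p * v p) + t * ((\<Sum>p\<in>J. Av p * u p) + (\<Sum>p\<in>J. Au p * v p))
      + t\<^sup>2 * (\<Sum>p\<in>J. Au p * u p)"
    by (simp add: algebra_simps power2_eq_square sum.distrib sum_distrib_left)
  also have "\<dots> = quad_form J A v + 2 * t * (\<Sum>p\<in>J. Av p * u p) + t\<^sup>2 * quad_form J A u"
    unfolding cross by (simp add: quad_form_def Av_def Au_def)
  finally show ?thesis by (simp add: Av_def)
qed

lemma continuous_on_coordinate [continuous_intros]: "continuous_on S (\<lambda>x::'a \<Rightarrow> real. x i)"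
  by (rule continuous_on_subset[OF continuous_on_product_coordinates]) auto

lemma compact_unit_sphere_on:
  assumes "finite J"
  shows "compact {w :: 'a \<Rightarrow> real. (\<forall>i. i \<notin> J \<longrightarrow> w i = 0) \<and> sq_norm_on J w = 1}"
    (is "compact ?S")
proof -
  define K where "K = PiE UNIV (\<lambda>i. if i \<in> J then {-1..1::real} else {0})"
  have "compactin (product_topology (\<lambda>i. euclideanreal) UNIV) K"
    unfolding K_def by (subst compactin_PiE) (auto simp: compactin_euclidean_iff)
  then have "compact K" by (simp add: euclidean_product_topology compactin_euclidean_iff)
  moreover have "closed ?S"
    unfolding sq_norm_on_def
    by (intro closed_Collect_conj closed_Collect_all closed_Collect_imp closed_Collect_eq
        closed_Collect_const open_Collect_const continuous_intros)
  ultimately have "compact (K \<inter> ?S)" by (rule compact_Int_closed)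
  moreover have "?S \<subseteq> K"
  proof
    fix w assume w: "w \<in> ?S"
    have "\<bar>w i\<bar> \<le> 1" if "i \<in> J" for i
    proof -
      have "(w i)\<^sup>2 \<le> sq_norm_on J w"
        unfolding sq_norm_on_def using that assms by (intro member_le_sum) auto
      then show ?thesis using w by (simp add: abs_square_le_1)
    qed
    then show "w \<in> K" using w unfolding K_def by (fastforce simp: abs_le_iff)
  qed
  ultimately show ?thesis by (simp add: Int_absorb1)
qed

lemma quad_form_attains_min_on_unit_sphere:
  assumes "finite J" "J \<noteq> {}"
  obtains v where "sq_norm_on J v = 1"
    "\<And>w. sq_norm_on J w = 1 \<Longrightarrow> quad_form J A v \<le> quad_form J A w"
proof -
  define S where "S = {w :: 'a \<Rightarrow> real. (\<forall>i. i \<notin> J \<longrightarrow> w i = 0) \<and> sq_norm_on J w = 1}"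
  obtain j where "j \<in> J" using assms(2) by auto
  have "sq_norm_on J (\<lambda>i. if i = j then 1 else 0) = (\<Sum>p\<in>J. if p = j then 1 else 0)"
    unfolding sq_norm_on_def by (intro sum.cong) auto
  also have "\<dots> = 1" using assms(1) \<open>j \<in> J\<close> by simp
  finally have "(\<lambda>i. if i = j then 1 else 0) \<in> S"
    unfolding S_def using \<open>j \<in> J\<close> by auto
  then have nonempty: "S \<noteq> {}" by blast
  have compact: "compact S"
    unfolding S_def by (rule compact_unit_sphere_on[OF assms(1)])
  have cont: "continuous_on S (quad_form J A)"
    unfolding quad_form_def by (intro continuous_intros)
  obtain v where v: "v \<in> S" and v_min: "\<forall>w\<in>S. quad_form J A v \<le> quad_form J A w"
    using continuous_attains_inf[OF compact nonempty cont] by blast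
  show ?thesis
  proof
    show "sq_norm_on J v = 1" using v unfolding S_def by simp
    fix w assume w: "sq_norm_on J w = 1"
    define w' where "w' i = (if i \<in> J then w i else 0)" for i
    have norm_w': "sq_norm_on J w' = sq_norm_on J w" and quad_w': "quad_form J A w' = quad_form J A w"
      unfolding sq_norm_on_def quad_form_def w'_def by (auto intro!: sum.cong)
    have "w' \<in> S"
      unfolding S_def using w norm_w' by (simp add: w'_def)
    then show "quad_form J A v \<le> quad_form J A w"
      using v_min quad_w' by auto
  qed
qed

lemma quad_form_ge_of_unit_sphere:
  assumes "finite J" and min: "\<And>w. sq_norm_on J w = 1 \<Longrightarrow> \<mu> \<le> quad_form J A w"
  shows "\<mu> * sq_norm_on J w \<le> quad_form J A w"
proof (cases "sq_norm_on J w = 0")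
  case True
  then have "quad_form J A w = 0"
    using sq_norm_on_eq_0_iff[OF assms(1)] unfolding quad_form_def by simp
  then show ?thesis using True by simp
next
  case False
  then have pos: "0 < sq_norm_on J w" using sq_norm_on_nonneg[of J w] by simp
  define c where "c = 1 / sqrt (sq_norm_on J w)"
  have c2: "c\<^sup>2 = 1 / sq_norm_on J w" unfolding c_def using pos by (simp add: power_divide)
  have "\<mu> \<le> quad_form J A (\<lambda>i. c * w i)"
    using pos by (intro min) (simp add: sq_norm_on_scale c2)
  then show ?thesis using pos by (simp add: quad_form_scale c2 field_simps)
qed

text \<open>Moving from the null vector \<open>v\<close> a little in the direction \<open>u = A v\<close> would make the
  form negative unless \<open>u = 0\<close>.\<close>

lemma psd_quad_form_null_in_kernel:
  assumes "finite J" and sym: "\<And>p q. p \<in> J \<Longrightarrow> q \<in> J \<Longrightarrow> A p q = A q p"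
    and psd: "\<And>w. 0 \<le> quad_form J A w" and null: "quad_form J A v = 0" and "p \<in> J"
  shows "(\<Sum>q\<in>J. A p q * v q) = 0"
proof -
  define u where "u p = (\<Sum>q\<in>J. A p q * v q)" for p
  define c where "c = sq_norm_on J u"
  have "(\<Sum>p\<in>J. (\<Sum>q\<in>J. A p q * v q) * u p) = c"
    unfolding c_def sq_norm_on_def u_def by (simp add: power2_eq_square)
  then have expand: "quad_form J A (\<lambda>i. v i + t * u i) = 2 * t * c + t\<^sup>2 * quad_form J A u" for t
    using quad_form_add_scaled[OF sym, where v = v and t = t and u = u] null by simp
  have "c = 0"
  proof (rule ccontr)
    assume "c \<noteq> 0"
    then have "c > 0" using sq_norm_on_nonneg[of J u] unfolding c_def by simp
    define d where "d = quad_form J A u + 1"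
    have "d \<ge> 1" unfolding d_def using psd[of u] by simp
    have Qu: "quad_form J A u = d - 1" unfolding d_def by simp
    have "quad_form J A (\<lambda>i. v i + (- c / d) * u i) = - (c\<^sup>2 * (d + 1)) / d\<^sup>2"
      unfolding expand Qu using \<open>d \<ge> 1\<close> by (simp add: field_simps power2_eq_square)
    also have "\<dots> < 0" using \<open>c > 0\<close> \<open>d \<ge> 1\<close> by (intro divide_neg_pos) auto
    finally show False using psd by (meson not_le)
  qed
  then show ?thesis
    using sq_norm_on_eq_0_iff[OF assms(1)] \<open>p \<in> J\<close> unfolding c_def u_def by auto
qed

lemma sum_diag_shift:
  fixes A :: "'a \<Rightarrow> 'a \<Rightarrow> real"
  assumes "finite J" "p \<in> J"
  shows "(\<Sum>q\<in>J. (A p q - \<mu> * (if p = q then 1 else 0)) * w q) = (\<Sum>q\<in>J. A p q * w q) - \<mu> * w p"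
proof -
  have "(A p q - \<mu> * (if p = q then 1 else 0)) * w q = A p q * w q - (if p = q then \<mu> * w q else 0)" for q
    by (cases "p = q") (simp_all add: left_diff_distrib)
  then show ?thesis using assms by (simp add: sum_subtractf)
qed

lemma quad_form_diag_shift:
  fixes A :: "'a \<Rightarrow> 'a \<Rightarrow> real"
  assumes "finite J"
  shows "quad_form J (\<lambda>p q. A p q - \<mu> * (if p = q then 1 else 0)) w
       = quad_form J A w - \<mu> * sq_norm_on J w"
proof -
  have "quad_form J (\<lambda>p q. A p q - \<mu> * (if p = q then 1 else 0)) w
      = (\<Sum>p\<in>J. ((\<Sum>q\<in>J. A p q * w q) - \<mu> * w p) * w p)"
    unfolding quad_form_def using sum_diag_shift[OF assms] by (intro sum.cong) auto
  then show ?thesis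
    unfolding quad_form_def sq_norm_on_def
    by (simp add: left_diff_distrib sum_subtractf sum_distrib_left power2_eq_square mult.assoc)
qed

lemma symmetric_min_eigenvector:
  assumes "finite J" "J \<noteq> {}" and sym: "\<And>p q. p \<in> J \<Longrightarrow> q \<in> J \<Longrightarrow> A p q = A q p"
  obtains v \<mu> where "\<exists>j\<in>J. v j \<noteq> 0" "\<forall>p\<in>J. (\<Sum>q\<in>J. A p q * v q) = \<mu> * v p"
    "\<And>w. \<mu> * sq_norm_on J w \<le> quad_form J A w"
proof -
  obtain v where v: "sq_norm_on J v = 1"
    and v_min: "\<And>w. sq_norm_on J w = 1 \<Longrightarrow> quad_form J A v \<le> quad_form J A w"
    using quad_form_attains_min_on_unit_sphere[OF assms(1,2)] by blast
  define \<mu> where "\<mu> = quad_form J A v"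
  define B where "B p q = A p q - \<mu> * (if p = q then 1 else 0)" for p q
  have bound: "\<mu> * sq_norm_on J w \<le> quad_form J A w" for w
    using quad_form_ge_of_unit_sphere[OF assms(1) v_min] unfolding \<mu>_def .
  have kernel: "(\<Sum>q\<in>J. B p q * v q) = 0" if "p \<in> J" for p
  proof (rule psd_quad_form_null_in_kernel[OF assms(1) _ _ _ that])
    show "B x y = B y x" if "x \<in> J" "y \<in> J" for x y using sym that by (simp add: B_def)
    show "0 \<le> quad_form J B w" for w
      using bound[of w] unfolding B_def quad_form_diag_shift[OF assms(1)] by simp
    show "quad_form J B v = 0"
      unfolding B_def quad_form_diag_shift[OF assms(1)] v by (simp add: \<mu>_def)
  qed
  have "(\<Sum>q\<in>J. A p q * v q) = \<mu> * v p" if "p \<in> J" for p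
    using kernel[OF that] sum_diag_shift[OF assms(1) that, of A \<mu> v] by (simp add: B_def)
  moreover have "\<exists>j\<in>J. v j \<noteq> 0"
    using v sq_norm_on_eq_0_iff[OF assms(1), of v] by auto
  ultimately show ?thesis using that bound by blast
qed

lemma symmetric_max_eigenvector:
  assumes "finite J" "J \<noteq> {}" and sym: "\<And>p q. p \<in> J \<Longrightarrow> q \<in> J \<Longrightarrow> A p q = A q p"
  obtains v \<mu> where "\<exists>j\<in>J. v j \<noteq> 0" "\<forall>p\<in>J. (\<Sum>q\<in>J. A p q * v q) = \<mu> * v p"
    "\<And>w. quad_form J A w \<le> \<mu> * sq_norm_on J w"
proof -
  have sym_neg: "\<And>p q. p \<in> J \<Longrightarrow> q \<in> J \<Longrightarrow> - A p q = - A q p"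
    using sym by simp
  obtain v \<mu> where v: "\<exists>j\<in>J. v j \<noteq> 0" and eig: "\<forall>p\<in>J. (\<Sum>q\<in>J. - A p q * v q) = \<mu> * v p"
    and bound: "\<And>w. \<mu> * sq_norm_on J w \<le> quad_form J (\<lambda>p q. - A p q) w"
    using symmetric_min_eigenvector[where A = "\<lambda>p q. - A p q", OF assms(1,2) sym_neg] by blast
  show ?thesis
  proof (rule that[of v "- \<mu>"])
    show "\<forall>p\<in>J. (\<Sum>q\<in>J. A p q * v q) = - \<mu> * v p"
      using eig by (simp add: sum_negf minus_equation_iff)
    show "quad_form J A w \<le> - \<mu> * sq_norm_on J w" for w
      using bound[of w] unfolding quad_form_def by (simp add: sum_negf)
  qed (rule v)
qed

definition incr_pairs :: "nat \<Rightarrow> (nat \<times> nat) set" where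
  "incr_pairs n = {(k, l). k < l \<and> l < n}"

text \<open>The matrix of the curvature operator in the basis \<open>\<omega>\<^sup>k \<and> \<omega>\<^sup>l\<close>, \<open>k < l\<close>.\<close>

definition curv_matrix :: "(nat \<Rightarrow> nat \<Rightarrow> nat \<Rightarrow> nat \<Rightarrow> real) \<Rightarrow> nat \<times> nat \<Rightarrow> nat \<times> nat \<Rightarrow> real" where
  "curv_matrix R = (\<lambda>(k, l) (i, j). R i j l k - R i j k l)"

lemma finite_incr_pairs: "finite (incr_pairs n)"
  by (rule finite_subset[of _ "{..<n} \<times> {..<n}"]) (auto simp: incr_pairs_def)

lemma sum_incr_pairs:
  "(\<Sum>k<n. \<Sum>l<n. if k < l then f k l else 0) = (\<Sum>(k, l)\<in>incr_pairs n. f k l)"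
proof -
  have "(\<Sum>k<n. \<Sum>l<n. if k < l then f k l else 0)
      = (\<Sum>(k, l)\<in>{..<n} \<times> {..<n}. if k < l then f k l else 0)"
    by (simp add: sum.cartesian_product)
  also have "\<dots> = (\<Sum>(k, l)\<in>incr_pairs n. f k l)"
    by (rule sum.mono_neutral_cong_right) (auto simp: incr_pairs_def split: if_split_asm)
  finally show ?thesis .
qed

lemma curv_op_eq_sum:
  "curv_op n R a k l = (\<Sum>i<n. \<Sum>j<n. if i < j then curv_matrix R (k, l) (i, j) * a i j else 0)"
proof -
  have "(if i < j then a i j * R i j l k else 0) - (if i < j then a i j * R i j k l else 0)
      = (if i < j then curv_matrix R (k, l) (i, j) * a i j else 0)" for i j
    by (simp add: curv_matrix_def algebra_simps)
  then show ?thesis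
    unfolding curv_op_def wedge_coeffs_def by (simp add: sum_subtractf[symmetric])
qed

lemma curv_op_eq_sum_incr_pairs:
  "curv_op n R a k l = (\<Sum>(i, j)\<in>incr_pairs n. curv_matrix R (k, l) (i, j) * a i j)"
  unfolding curv_op_eq_sum sum_incr_pairs ..

lemma inner2_eq_sum_incr_pairs: "inner2 n a b = (\<Sum>(k, l)\<in>incr_pairs n. a k l * b k l)"
  unfolding inner2_def by (rule sum_incr_pairs)

lemma quad_form_curv_matrix:
  "quad_form (incr_pairs n) (curv_matrix R) (\<lambda>(k, l). a k l) = inner2 n (curv_op n R a) a"
  unfolding quad_form_def inner2_eq_sum_incr_pairs curv_op_eq_sum_incr_pairs
  by (simp add: split_def)

lemma sq_norm_on_incr_pairs: "sq_norm_on (incr_pairs n) (\<lambda>(k, l). a k l) = inner2 n a a"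
  unfolding sq_norm_on_def inner2_eq_sum_incr_pairs by (simp add: split_def power2_eq_square)

lemma inner2_self_nonneg: "0 \<le> inner2 n a a"
  using sq_norm_on_nonneg sq_norm_on_incr_pairs by metis

lemma curv_matrix_sym:
  assumes "curvature_tensor n R" "x \<in> incr_pairs n" "y \<in> incr_pairs n"
  shows "curv_matrix R x y = curv_matrix R y x"
proof -
  obtain k l i j where xy: "x = (k, l)" "y = (i, j)" and bounds: "k < n" "l < n" "i < n" "j < n"
    using assms(2,3) unfolding incr_pairs_def by auto
  have R: "R a b c d = - R b a c d" "R a b c d = - R a b d c" "R a b c d = R c d a b"
    if "a < n" "b < n" "c < n" "d < n" for a b c d
    using assms(1) that unfolding curvature_tensor_def by blast+
  have "R i j l k = R k l j i"
    using R(3)[of i j l k] R(1)[of l k i j] R(2)[of k l i j] bounds by simp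
  moreover have "R i j k l = R k l i j"
    using R(3)[of i j k l] bounds by simp
  ultimately show ?thesis unfolding xy curv_matrix_def by simp
qed

lemma curv_eigenvalue_of_incr_pairs:
  assumes nonzero: "\<exists>x\<in>incr_pairs n. v x \<noteq> 0"
    and eigen: "\<forall>x\<in>incr_pairs n. (\<Sum>y\<in>incr_pairs n. curv_matrix R x y * v y) = \<mu> * v x"
  shows "\<mu> \<in> curv_eigenvalues n R"
proof -
  define a where "a k l = (if k < l then v (k, l) else if l < k then - v (l, k) else 0)" for k l
  have eigen_a: "curv_op n R a k l = (\<Sum>y\<in>incr_pairs n. curv_matrix R (k, l) y * v y)" for k l
    unfolding curv_op_eq_sum_incr_pairs by (intro sum.cong refl) (auto simp: a_def incr_pairs_def)
  have antisym: "curv_op n R a k l = - curv_op n R a l k" for k l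
    unfolding curv_op_def wedge_coeffs_def by simp
  have "curv_op n R a k l = \<mu> * a k l" if "k < n" "l < n" for k l
  proof (cases k l rule: linorder_cases)
    case less
    then show ?thesis using eigen that unfolding eigen_a by (simp add: a_def incr_pairs_def)
  next
    case greater
    then have "curv_op n R a l k = \<mu> * v (l, k)"
      using eigen that unfolding eigen_a by (simp add: incr_pairs_def)
    then show ?thesis using antisym[of k l] greater by (simp add: a_def)
  next
    case equal
    then show ?thesis using antisym[of k l] by (simp add: a_def)
  qed
  moreover have "two_form n a" unfolding two_form_def a_def by auto
  moreover have "\<exists>k<n. \<exists>l<n. k < l \<and> a k l \<noteq> 0"
  proof -
    obtain k l where "k < l" "l < n" "v (k, l) \<noteq> 0"
      using nonzero unfolding incr_pairs_def by auto
    then have "k < n \<and> l < n \<and> k < l \<and> a k l \<noteq> 0" by (simp add: a_def)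
    then show ?thesis by blast
  qed
  ultimately show ?thesis unfolding curv_eigenvalues_def by blast
qed

text \<open>The curvature operator as an \<open>n\<^sup>2 \<times> n\<^sup>2\<close> matrix acting on all coefficients \<open>a k l\<close>,
  indexed by \<open>k * n + l\<close>; its characteristic polynomial shows that there are finitely many
  eigenvalues, so that \<open>lambda_R\<close> and \<open>Lambda_R\<close> are genuine extrema.\<close>

definition curv_op_mat :: "nat \<Rightarrow> (nat \<Rightarrow> nat \<Rightarrow> nat \<Rightarrow> nat \<Rightarrow> real) \<Rightarrow> real mat" where
  "curv_op_mat n R = mat (n * n) (n * n) (\<lambda>(r, c).
     if c div n < c mod n then curv_matrix R (r div n, r mod n) (c div n, c mod n) else 0)"

lemma curv_op_mat_carrier: "curv_op_mat n R \<in> carrier_mat (n * n) (n * n)"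
  unfolding curv_op_mat_def by simp

lemma mult_add_less_square:
  fixes i j n :: nat
  assumes "i < n" "j < n"
  shows "i * n + j < n * n"
proof -
  have "i * n + j < (i + 1) * n" using assms(2) by simp
  also have "\<dots> \<le> n * n" using assms(1) by (intro mult_right_mono) auto
  finally show ?thesis .
qed

lemma sum_lessThan_mult_div_mod:
  fixes f :: "nat \<Rightarrow> nat \<Rightarrow> 'b::comm_monoid_add"
  shows "(\<Sum>c<n * n. f (c div n) (c mod n)) = (\<Sum>i<n. \<Sum>j<n. f i j)"
proof -
  have "(\<Sum>c<n * n. f (c div n) (c mod n)) = (\<Sum>(i, j)\<in>{..<n} \<times> {..<n}. f i j)"
  proof (rule sum.reindex_bij_witness[where i = "\<lambda>(i, j). i * n + j" and j = "\<lambda>c. (c div n, c mod n)"])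
    fix c assume "c \<in> {..<n * n}"
    then have "c < n * n" "0 < n" by (auto intro: gr0I)
    then show "(c div n, c mod n) \<in> {..<n} \<times> {..<n}"
      by (simp add: less_mult_imp_div_less)
    show "(\<lambda>(i, j). i * n + j) (c div n, c mod n) = c" by simp
    show "(case (c div n, c mod n) of (i, j) \<Rightarrow> f i j) = f (c div n) (c mod n)" by simp
  next
    fix x assume "x \<in> {..<n} \<times> {..<n}"
    then obtain i j where x: "x = (i, j)" "i < n" "j < n" by auto
    then show "(\<lambda>c. (c div n, c mod n)) ((\<lambda>(i, j). i * n + j) x) = x" by simp
    show "(\<lambda>(i, j). i * n + j) x \<in> {..<n * n}"
      using x mult_add_less_square by simp
  qed
  then show ?thesis by (simp add: sum.cartesian_product)
qed

lemma curv_op_mat_mult_vec: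
  "curv_op_mat n R *\<^sub>v vec (n * n) (\<lambda>r. a (r div n) (r mod n))
     = vec (n * n) (\<lambda>r. curv_op n R a (r div n) (r mod n))"
proof (rule eq_vecI)
  fix r assume "r < dim_vec (vec (n * n) (\<lambda>r. curv_op n R a (r div n) (r mod n)))"
  then have "r < n * n" by simp
  then show "(curv_op_mat n R *\<^sub>v vec (n * n) (\<lambda>r. a (r div n) (r mod n))) $ r
      = vec (n * n) (\<lambda>r. curv_op n R a (r div n) (r mod n)) $ r"
    unfolding curv_op_mat_def curv_op_eq_sum
    by (simp add: scalar_prod_def lessThan_atLeast0[symmetric] if_distrib[of "\<lambda>x. x * _"]
        sum_lessThan_mult_div_mod[of "\<lambda>i j. if i < j then curv_matrix R (r div n, r mod n) (i, j) * a i j else 0"]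
        cong: if_cong)
qed (simp add: curv_op_mat_def)

lemma curv_eigenvalue_root_char_poly:
  assumes "\<mu> \<in> curv_eigenvalues n R"
  shows "poly (char_poly (curv_op_mat n R)) \<mu> = 0"
proof -
  obtain a k l where eigen: "\<forall>k<n. \<forall>l<n. curv_op n R a k l = \<mu> * a k l"
    and kl: "k < n" "l < n" "a k l \<noteq> 0"
    using assms unfolding curv_eigenvalues_def by blast
  define w where "w = vec (n * n) (\<lambda>r. a (r div n) (r mod n))"
  have "k * n + l < n * n"
    using kl by (intro mult_add_less_square)
  then have "w $ (k * n + l) \<noteq> 0" unfolding w_def using kl by simp
  then have "w \<noteq> 0\<^sub>v (n * n)"
    using \<open>k * n + l < n * n\<close> by auto
  moreover have "curv_op_mat n R *\<^sub>v w = \<mu> \<cdot>\<^sub>v w"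
  proof (rule eq_vecI)
    fix r assume "r < dim_vec (\<mu> \<cdot>\<^sub>v w)"
    then have "r < n * n" "0 < n" by (auto simp: w_def intro: gr0I)
    then show "(curv_op_mat n R *\<^sub>v w) $ r = (\<mu> \<cdot>\<^sub>v w) $ r"
      unfolding w_def curv_op_mat_mult_vec using eigen by (simp add: less_mult_imp_div_less)
  qed (simp add: w_def curv_op_mat_mult_vec)
  ultimately have "eigenvector (curv_op_mat n R) w \<mu>"
    unfolding eigenvector_def by (simp add: w_def curv_op_mat_def)
  then have "eigenvalue (curv_op_mat n R) \<mu>"
    unfolding eigenvalue_def by blast
  then show ?thesis
    using eigenvalue_root_char_poly[OF curv_op_mat_carrier] by simp
qed

lemma finite_curv_eigenvalues: "finite (curv_eigenvalues n R)"
proof -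
  have "curv_eigenvalues n R \<subseteq> {x. poly (char_poly (curv_op_mat n R)) x = 0}"
    using curv_eigenvalue_root_char_poly by blast
  moreover have "char_poly (curv_op_mat n R) \<noteq> 0"
    using degree_monic_char_poly[OF curv_op_mat_carrier[of n R]] by auto
  ultimately show ?thesis
    using poly_roots_finite finite_subset by blast
qed

lemma lambda_R_le_curv_op_quotient:
  assumes "curvature_tensor n R"
  shows "lambda_R n R * inner2 n a a \<le> inner2 n (curv_op n R a) a"
proof (cases "incr_pairs n = {}")
  case True
  then show ?thesis by (simp add: inner2_eq_sum_incr_pairs)
next
  case False
  obtain v \<mu> where nonzero: "\<exists>x\<in>incr_pairs n. v x \<noteq> 0"
    and eigen: "\<forall>x\<in>incr_pairs n. (\<Sum>y\<in>incr_pairs n. curv_matrix R x y * v y) = \<mu> * v x"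
    and bound: "\<And>w. \<mu> * sq_norm_on (incr_pairs n) w \<le> quad_form (incr_pairs n) (curv_matrix R) w"
    using symmetric_min_eigenvector[where A = "curv_matrix R", OF finite_incr_pairs False]
      curv_matrix_sym[OF assms] by blast
  have "lambda_R n R \<le> \<mu>"
    unfolding lambda_R_def
    using finite_curv_eigenvalues curv_eigenvalue_of_incr_pairs[OF nonzero eigen] by simp
  then have "lambda_R n R * inner2 n a a \<le> \<mu> * inner2 n a a"
    using inner2_self_nonneg by (rule mult_right_mono)
  also have "\<dots> \<le> inner2 n (curv_op n R a) a"
    using bound[of "\<lambda>(k, l). a k l"] by (simp add: quad_form_curv_matrix sq_norm_on_incr_pairs)
  finally show ?thesis .
qed

lemma curv_op_quotient_le_Lambda_R:
  assumes "curvature_tensor n R"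
  shows "inner2 n (curv_op n R a) a \<le> Lambda_R n R * inner2 n a a"
proof (cases "incr_pairs n = {}")
  case True
  then show ?thesis by (simp add: inner2_eq_sum_incr_pairs)
next
  case False
  obtain v \<mu> where nonzero: "\<exists>x\<in>incr_pairs n. v x \<noteq> 0"
    and eigen: "\<forall>x\<in>incr_pairs n. (\<Sum>y\<in>incr_pairs n. curv_matrix R x y * v y) = \<mu> * v x"
    and bound: "\<And>w. quad_form (incr_pairs n) (curv_matrix R) w \<le> \<mu> * sq_norm_on (incr_pairs n) w"
    using symmetric_max_eigenvector[where A = "curv_matrix R", OF finite_incr_pairs False]
      curv_matrix_sym[OF assms] by blast
  have "\<mu> \<le> Lambda_R n R"
    unfolding Lambda_R_def
    using finite_curv_eigenvalues curv_eigenvalue_of_incr_pairs[OF nonzero eigen] by simp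
  have "inner2 n (curv_op n R a) a \<le> \<mu> * inner2 n a a"
    using bound[of "\<lambda>(k, l). a k l"] by (simp add: quad_form_curv_matrix sq_norm_on_incr_pairs)
  also have "\<dots> \<le> Lambda_R n R * inner2 n a a"
    using \<open>\<mu> \<le> Lambda_R n R\<close> inner2_self_nonneg by (rule mult_right_mono)
  finally show ?thesis .
qed

theorem lemma7p4:
  fixes n p :: nat and R :: "nat \<Rightarrow> nat \<Rightarrow> nat \<Rightarrow> nat \<Rightarrow> real" and g :: "nat list \<Rightarrow> real"
  assumes "curvature_tensor n R"
    and "1 \<le> p" and "p \<le> n"
    and "p_form n p g"
  shows "real (p * (n - p)) * lambda_R n R * form_norm_sq n p g
           \<le> (\<Sum>I\<in>incr_indices n p. inner2 n (curv_op n R (xi n p g I)) (xi n p g I))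
       \<and> (\<Sum>I\<in>incr_indices n p. inner2 n (curv_op n R (xi n p g I)) (xi n p g I))
           \<le> real (p * (n - p)) * Lambda_R n R * form_norm_sq n p g"
proof -
  have norm: "(\<Sum>I\<in>incr_indices n p. inner2 n (xi n p g I) (xi n p g I))
      = real (p * (n - p)) * form_norm_sq n p g"
    by (rule sum_xi_norm_sq[OF assms(4,3)])
  have "lambda_R n R * (\<Sum>I\<in>incr_indices n p. inner2 n (xi n p g I) (xi n p g I))
      \<le> (\<Sum>I\<in>incr_indices n p. inner2 n (curv_op n R (xi n p g I)) (xi n p g I))"
    unfolding sum_distrib_left by (intro sum_mono lambda_R_le_curv_op_quotient[OF assms(1)])
  moreover have "(\<Sum>I\<in>incr_indices n p. inner2 n (curv_op n R (xi n p g I)) (xi n p g I))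
      \<le> Lambda_R n R * (\<Sum>I\<in>incr_indices n p. inner2 n (xi n p g I) (xi n p g I))"
    unfolding sum_distrib_left by (intro sum_mono curv_op_quotient_le_Lambda_R[OF assms(1)])
  ultimately show ?thesis unfolding norm by (simp add: ac_simps)
qed

end
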